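(* Let $\mathbb{F},\widetilde{\mathbb{F}}$ be fields with $\operatorname{char}(\mathbb{F})\notin\{2,3,5\}$ and $\operatorname{char}(\widetilde{\mathbb{F}})\neq 2$, and let $f:\mathbb{F}\to\widetilde{\mathbb{F}}$ be an SD-map. Then $\operatorname{char}(\mathbb{F})=\operatorname{char}(\widetilde{\mathbb{F}})$, and moreover $f$ fixes the common prime subfield (i.e.\ $f$ restricted to the prime subfield of $\mathbb{F}$ is the canonical identification with the prime subfield of $\widetilde{\mathbb{F}}$).
   Context: A map $f:\mathbb{F}\to\widetilde{\mathbb{F}}$ between fields is called an SD-map if for all $x\neq y$ in $\mathbb{F}$ one has $f(x)\neq f(y)$ and \[ f\left(\frac{x+y}{x-y}\right)=\frac{f(x)+f(y)}{f(x)-f(y)}. \] *)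

theory Defs
  imports Main
begin

definition SD_map :: "('a::field \<Rightarrow> 'b::field) \<Rightarrow> bool" where
  "SD_map f \<longleftrightarrow> (\<forall>x y. x \<noteq> y \<longrightarrow>
      f x \<noteq> f y \<and> f ((x + y) / (x - y)) = (f x + f y) / (f x - f y))"

end

theory Submission
  imports Defs "HOL-Computational_Algebra.Primes"
begin

text \<open>
  Evaluating the SD-identity at \<open>(1, 0)\<close> and \<open>(-1, 0)\<close> gives \<open>f 1 = 1\<close> and \<open>f 0 = 0\<close>.
  Since \<open>(r y + y) / (r y - y) = (r + 1) / (r - 1)\<close>, comparing the identity at \<open>(r y, y)\<close>
  and \<open>(r, 1)\<close> shows that \<open>f\<close> is multiplicative, hence odd and compatible with division.
  For \<open>t = f 2\<close>, the identity at \<open>(2, 1)\<close>, \<open>(5, 3)\<close> and \<open>(6, 4)\<close>, together with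
  \<open>f 4 = t\<^sup>2\<close> and \<open>f 6 = t f 3\<close>, forces \<open>2 t\<^sup>2 (t + 1) (t - 2) (t\<^sup>2 + 1) = 0\<close>, and
  injectivity excludes every root but \<open>t = 2\<close> once \<open>2, 3, 5\<close> are nonzero in the domain.
  The identity at \<open>(k + 2, k)\<close> then gives \<open>f k = k\<close> for all natural numbers \<open>k\<close>; so the
  same natural numbers vanish in both fields, and \<open>f\<close> fixes every fraction \<open>m / n\<close>.
\<close>

lemma numeral_neq_0_if_CHAR_neq_prime:
  assumes "prime (numeral k :: nat)" and "CHAR('a::{semiring_1, zero_neq_one}) \<noteq> numeral k"
  shows "(numeral k :: 'a) \<noteq> 0"
proof
  assume "(numeral k :: 'a) = 0"
  then have "CHAR('a) dvd numeral k"
    by (metis of_nat_eq_0_iff_char_dvd of_nat_numeral)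
  with assms(1) have "CHAR('a) = 1 \<or> CHAR('a) = numeral k"
    using prime_nat_iff by blast
  with assms(2) show False
    by simp
qed

lemma CHAR_eq_if_of_nat_eq_0_iff:
  assumes "\<And>n. (of_nat n :: 'a::semiring_1) = 0 \<longleftrightarrow> (of_nat n :: 'b::semiring_1) = 0"
  shows "CHAR('a) = CHAR('b)"
  by (rule CHAR_eqI) (use assms in \<open>auto simp: of_nat_eq_0_iff_char_dvd\<close>)

(* For t = f 2, s = f 3, p = f 5 these are the SD-identity at (2, 1), (5, 3) and (6, 4). *)
lemma SD_values_polynomial:
  fixes t s p :: "'a::comm_ring_1"
  assumes at_2_1: "s * (t - 1) = t + 1"
    and at_5_3: "t * t * (p - s) = p + s"
    and at_6_4: "p * (t * s - t * t) = t * s + t * t"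
  shows "2 * (t * t * (t + 1) * (t - 2) * (t * t + 1)) = 0"
proof -
  have "p * (t * t - 1) = s * (t * t + 1)"
    using at_5_3 by (simp add: algebra_simps)
  then have p_eliminated: "s * (t * t + 1) * (t * s - t * t) = (t * s + t * t) * (t * t - 1)"
    using at_6_4 by (metis mult.assoc mult.commute)
  have "(t - 1)^2 * (s * (t * t + 1) * (t * s - t * t) - (t * s + t * t) * (t * t - 1))
      = t * (s * (t - 1))^2 * (t * t + 1) - s * (t - 1) * (t * t) * (t * t + 1) * (t - 1)
        - t * (s * (t - 1)) * (t * t - 1) * (t - 1) - t * t * (t * t - 1) * (t - 1)^2"
    by (simp add: algebra_simps power2_eq_square)
  also have "\<dots> = t * (t + 1)^2 * (t * t + 1) - (t + 1) * (t * t) * (t * t + 1) * (t - 1)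
        - t * (t + 1) * (t * t - 1) * (t - 1) - t * t * (t * t - 1) * (t - 1)^2"
    unfolding at_2_1 ..
  also have "\<dots> = - (2 * (t * t * (t + 1) * (t - 2) * (t * t + 1)))"
    by (simp add: algebra_simps power2_eq_square)
  finally show ?thesis
    using p_eliminated by simp
qed

lemma SD_mapD:
  assumes "SD_map f" and "x \<noteq> y"
  shows "f x \<noteq> f y" and "f ((x + y) / (x - y)) * (f x - f y) = f x + f y"
  using assms by (auto simp: SD_map_def)

locale SD_map_char_neq_2 =
  fixes f :: "'a::field \<Rightarrow> 'b::field"
  assumes SD_map: "SD_map f"
    and two_neq_0: "(2::'a) \<noteq> 0"
    and two_neq_0': "(2::'b) \<noteq> 0"
begin

lemma eq_iff: "f x = f y \<longleftrightarrow> x = y"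
  using SD_mapD(1)[OF SD_map] by blast

lemma SD_identity: "x \<noteq> y \<Longrightarrow> f ((x + y) / (x - y)) * (f x - f y) = f x + f y"
  using SD_mapD(2)[OF SD_map] .

lemma SD_identity_diff_2:
  assumes "x - y = 2"
  shows "f ((x + y) / 2) * (f x - f y) = f x + f y"
proof -
  have "x \<noteq> y"
    using assms two_neq_0 by auto
  then show ?thesis
    using SD_identity[of x y] assms by simp
qed

lemma map_1 [simp]: "f 1 = 1"
proof -
  have at_x_0: "f 1 * (f x - f 0) = f x + f 0" if "x \<noteq> 0" for x
    using SD_identity[OF that] that by simp
  have "(-1::'a) \<noteq> 1"
    using two_neq_0 by (metis add_eq_0_iff equation_minus_iff one_add_one)
  then have "f 1 \<noteq> f (-1)"
    by (simp add: eq_iff)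
  moreover have "(f 1 - 1) * (f 1 - f (-1)) = 0"
    using at_x_0[of 1] at_x_0[of "-1"] by (simp add: algebra_simps)
  ultimately show ?thesis
    by simp
qed

lemma map_0 [simp]: "f 0 = 0"
proof -
  have "f 1 * (f 1 - f 0) = f 1 + f 0"
    using SD_identity[of 1 0] by simp
  then have "2 * f 0 = 0"
    by (simp add: algebra_simps)
  then show ?thesis
    using two_neq_0' by simp
qed

lemma map_minus_1: "f (-1) = -1"
  using SD_identity[of 0 1] by (simp add: minus_equation_iff)

lemma map_mult: "f (r * y) = f r * f y"
proof (cases "r = 1 \<or> y = 0")
  case False
  then have "r \<noteq> 1" and "y \<noteq> 0" and "r * y \<noteq> y"
    by auto
  define c where "c = f ((r + 1) / (r - 1))"
  have "(r * y + y) / (r * y - y) = (r + 1) / (r - 1)"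
    using \<open>r \<noteq> 1\<close> \<open>y \<noteq> 0\<close> by (simp add: field_simps)
  then have at_ry_y: "c * (f (r * y) - f y) = f (r * y) + f y"
    using SD_identity[OF \<open>r * y \<noteq> y\<close>] by (simp add: c_def)
  have at_r_1: "c * (f r - 1) = f r + 1"
    using SD_identity[OF \<open>r \<noteq> 1\<close>] by (simp add: c_def)
  have "(f r + 1) * (f (r * y) - f y) = (f r - 1) * (c * (f (r * y) - f y))"
    unfolding at_r_1[symmetric] by (simp add: ac_simps)
  also have "\<dots> = (f r - 1) * (f (r * y) + f y)"
    by (simp only: at_ry_y)
  finally have "2 * f (r * y) = 2 * (f r * f y)"
    by (simp add: algebra_simps)
  then show ?thesis
    using two_neq_0' by simp
qed auto

lemma map_minus: "f (- x) = - f x"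
  using map_mult[of "-1" x] by (simp add: map_minus_1)

lemma map_inverse: "f (inverse x) = inverse (f x)"
proof (cases "x = 0")
  case False
  then have "f (inverse x) * f x = 1"
    by (simp flip: map_mult)
  then show ?thesis
    by (metis inverse_unique mult.commute)
qed simp

lemma map_divide: "f (x / y) = f x / f y"
  by (simp add: divide_inverse map_mult map_inverse)

lemma map_2:
  assumes "(3::'a) \<noteq> 0" and "(5::'a) \<noteq> 0"
  shows "f 2 = 2"
proof -
  define t s p where "t = f 2" and "s = f 3" and "p = f 5"
  have f4: "f 4 = t * t" and f6: "f 6 = t * s"
    using map_mult[of 2 2] map_mult[of 2 3] by (simp_all add: t_def s_def)
  have "(2::'a) \<noteq> 1"
    by (metis add_cancel_right_right one_add_one one_neq_zero)
  then have "s * (t - 1) = t + 1"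
    using SD_identity[of 2 1] by (simp add: t_def s_def)
  moreover have "t * t * (p - s) = p + s"
  proof -
    have "(5 + 3) / 2 = (4::'a)"
      using two_neq_0 by (simp add: field_simps)
    then show ?thesis
      using SD_identity_diff_2[of 5 3] by (simp only: f4 flip: s_def p_def) simp
  qed
  moreover have "p * (t * s - t * t) = t * s + t * t"
  proof -
    have "(6 + 4) / 2 = (5::'a)"
      using two_neq_0 by (simp add: field_simps)
    then show ?thesis
      using SD_identity_diff_2[of 6 4] by (simp only: f4 f6 flip: p_def) simp
  qed
  ultimately have "2 * (t * t * (t + 1) * (t - 2) * (t * t + 1)) = 0"
    by (rule SD_values_polynomial)
  moreover have "t \<noteq> 0"
    using two_neq_0 by (simp add: t_def flip: map_0 add: eq_iff)
  moreover have "t + 1 \<noteq> 0"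
    using assms(1) eq_iff[of 2 "-1"]
    by (simp add: t_def map_minus_1 eq_neg_iff_add_eq_0)
  moreover have "t * t + 1 \<noteq> 0"
    using assms(2) eq_iff[of 4 "-1"]
    by (simp add: f4 map_minus_1 eq_neg_iff_add_eq_0)
  ultimately show ?thesis
    using two_neq_0' by (simp add: t_def)
qed

lemma map_of_nat:
  assumes "f 2 = 2"
  shows "f (of_nat n) = of_nat n"
proof (induction n rule: induct_nat_012)
  case (ge2 k)
  define F where "F = f (of_nat (Suc (Suc k)))"
  have "(of_nat (Suc (Suc k)) + of_nat k) / 2 = (of_nat (Suc k) :: 'a)"
    using two_neq_0 by (simp add: field_simps)
  then have "of_nat (Suc k) * (F - of_nat k) = F + (of_nat k :: 'b)"
    using SD_identity_diff_2[of "of_nat (Suc (Suc k))" "of_nat k"]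
    by (simp only: ge2 flip: F_def) simp
  then have "of_nat k * F = of_nat k * (of_nat k + 2 :: 'b)"
    by (simp add: algebra_simps)
  moreover have "F = 2" if "(of_nat k :: 'b) = 0"
  proof -
    have "(of_nat k :: 'a) = 0"
      using that ge2(1) by (simp flip: map_0 add: eq_iff)
    then show ?thesis
      using assms by (simp add: F_def)
  qed
  ultimately have "F = of_nat k + 2"
    by force
  then show ?case
    by (simp add: F_def)
qed simp_all

lemma map_of_int:
  assumes "f 2 = 2"
  shows "f (of_int m) = of_int m"
proof (cases m rule: int_cases)
  case (neg n)
  then show ?thesis
    by (simp only: of_int_minus of_int_of_nat_eq map_minus map_of_nat[OF assms])
qed (simp add: map_of_nat[OF assms])

lemma CHAR_eq:
  assumes "f 2 = 2"
  shows "CHAR('a) = CHAR('b)"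
proof (rule CHAR_eq_if_of_nat_eq_0_iff)
  fix n
  show "(of_nat n :: 'a) = 0 \<longleftrightarrow> (of_nat n :: 'b) = 0"
    using eq_iff[of "of_nat n" 0] by (simp add: map_of_nat[OF assms])
qed

end

theorem theorem2p4:
  fixes f :: "'a::field \<Rightarrow> 'b::field"
  assumes "CHAR('a) \<notin> {2, 3, 5}"
    and "CHAR('b) \<noteq> 2"
    and "SD_map f"
  shows "CHAR('a) = CHAR('b) \<and>
    (\<forall>m n :: int. of_int n \<noteq> (0::'a) \<longrightarrow>
       f (of_int m / of_int n) = (of_int m / of_int n :: 'b))"
proof -
  have "(2::'a) \<noteq> 0" and "(3::'a) \<noteq> 0" and "(5::'a) \<noteq> 0" and "(2::'b) \<noteq> 0"
    using assms(1,2) by (simp_all add: numeral_neq_0_if_CHAR_neq_prime)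
  then interpret SD_map_char_neq_2 f
    using assms(3) by unfold_locales simp_all
  have "f 2 = 2"
    using map_2 \<open>(3::'a) \<noteq> 0\<close> \<open>(5::'a) \<noteq> 0\<close> .
  then show ?thesis
    by (simp add: CHAR_eq map_divide map_of_int)
qed

end
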